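(* Let $\mathbb{V}$ be a BIT speciale variety, $A$ a $\mathbb{V}$-algebra and $H$ a non-empty subset of $A$. The following conditions are equivalent, and they imply $0\in H$: (i) for every $a\in A$, every $1\le i\le n$ and all $h_1,\dots,h_n,h'_1,\dots,h'_n\in H$, one has $\alpha_i(\theta(h_1,\dots,h_n,a),\theta(h'_1,\dots,h'_n,a))\in H$; (ii) for every $a\in A$ the $\sim_H$-equivalence class of $a$ equals $\theta(H,\dots,H,a)$, and moreover, for all $a,b\in A$ with $a\sim_H b$, one has $\alpha_i(a,b)\in H$ for every $1\le i\le n$.
   Context: BIT speciale: the algebraic theory of $\mathbb{V}$ contains a constant $0$ and, for some $n\ge1$, binary terms $\alpha_1,\dots,\alpha_n$ and an $(n+1)$-ary term $\theta$ such that $\alpha_i(x,x)=0$ ($1\le i\le n$) and $\theta(\alpha_1(x,y),\dots,\alpha_n(x,y),y)=x$ are identities of $\mathbb{V}$. Notation: $\theta(H,\dots,H,a)=\{\theta(h_1,\dots,h_n,a)\mid h_1,\dots,h_n\in H\}$. For $a,b\in A$, $a\sim_H b$ iff $\theta(H,\dots,H,a)=\theta(H,\dots,H,b)$. *)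

theory Defs
  imports Main
begin

text \<open>An algebra A (carrier set) of a BIT speciale variety, seen through the
interpretations in A of the constant 0, the binary terms alpha_1..alpha_n
(alpha i, 1 \<le> i \<le> n) and the (n+1)-ary term theta (first n arguments
given as a list of length n), satisfying the defining identities on A.\<close>

definition bit_speciale_algebra ::
  "'a set \<Rightarrow> 'a \<Rightarrow> nat \<Rightarrow> (nat \<Rightarrow> 'a \<Rightarrow> 'a \<Rightarrow> 'a) \<Rightarrow> ('a list \<Rightarrow> 'a \<Rightarrow> 'a) \<Rightarrow> bool" where
  "bit_speciale_algebra A z n \<alpha> \<theta> \<longleftrightarrow>
     1 \<le> n \<and> z \<in> A \<and>
     (\<forall>i\<in>{1..n}. \<forall>x\<in>A. \<forall>y\<in>A. \<alpha> i x y \<in> A) \<and>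
     (\<forall>hs a. length hs = n \<longrightarrow> set hs \<subseteq> A \<longrightarrow> a \<in> A \<longrightarrow> \<theta> hs a \<in> A) \<and>
     (\<forall>i\<in>{1..n}. \<forall>x\<in>A. \<alpha> i x x = z) \<and>
     (\<forall>x\<in>A. \<forall>y\<in>A. \<theta> (map (\<lambda>i. \<alpha> i x y) [1..<n+1]) y = x)"

definition theta_set :: "nat \<Rightarrow> ('a list \<Rightarrow> 'a \<Rightarrow> 'a) \<Rightarrow> 'a set \<Rightarrow> 'a \<Rightarrow> 'a set" where
  "theta_set n \<theta> H a = {\<theta> hs a | hs. length hs = n \<and> set hs \<subseteq> H}"

definition sim_H :: "nat \<Rightarrow> ('a list \<Rightarrow> 'a \<Rightarrow> 'a) \<Rightarrow> 'a set \<Rightarrow> 'a \<Rightarrow> 'a \<Rightarrow> bool" where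
  "sim_H n \<theta> H a b \<longleftrightarrow> theta_set n \<theta> H a = theta_set n \<theta> H b"

end

theory Submission
  imports Defs
begin

text \<open>Since \<open>a = \<theta>(\<alpha>\<^sub>1(a,b),\<dots>,\<alpha>\<^sub>n(a,b),b)\<close>, the set \<open>\<theta>(H,\<dots>,H,b)\<close> contains every \<open>a\<close>
  with all \<open>\<alpha>\<^sub>i(a,b) \<in> H\<close>, and since \<open>\<theta>(0,\<dots>,0,b) = b\<close> it contains \<open>b\<close> once \<open>0 \<in> H\<close>.
  Condition (i) forces \<open>0 = \<alpha>\<^sub>1(x,x) \<in> H\<close> and the converse inclusion as well, so any \<open>b \<in> \<theta>(H,\<dots>,H,a)\<close> satisfies
  \<open>\<theta>(H,\<dots>,H,a) \<subseteq> \<theta>(H,\<dots>,H,b)\<close>; as then also \<open>a \<in> \<theta>(H,\<dots>,H,b)\<close>, the sets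
  \<open>\<theta>(H,\<dots>,H,a)\<close> partition \<open>A\<close> and are the \<open>\<sim>\<^sub>H\<close>-classes. Conversely, under (ii) two elements
  of \<open>\<theta>(H,\<dots>,H,a)\<close> are \<open>\<sim>\<^sub>H\<close>-equivalent to \<open>a\<close>, hence to each other.\<close>

definition theta_set_alpha_closed ::
  "'a set \<Rightarrow> nat \<Rightarrow> (nat \<Rightarrow> 'a \<Rightarrow> 'a \<Rightarrow> 'a) \<Rightarrow> ('a list \<Rightarrow> 'a \<Rightarrow> 'a) \<Rightarrow> 'a set \<Rightarrow> bool" where
  "theta_set_alpha_closed A n \<alpha> \<theta> H \<longleftrightarrow>
     (\<forall>a\<in>A. \<forall>i\<in>{1..n}. \<forall>x\<in>theta_set n \<theta> H a. \<forall>y\<in>theta_set n \<theta> H a. \<alpha> i x y \<in> H)"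

lemma theta_set_alpha_closed_iff:
  "theta_set_alpha_closed A n \<alpha> \<theta> H \<longleftrightarrow>
   (\<forall>a\<in>A. \<forall>i\<in>{1..n}. \<forall>hs hs'. length hs = n \<longrightarrow> set hs \<subseteq> H \<longrightarrow>
      length hs' = n \<longrightarrow> set hs' \<subseteq> H \<longrightarrow> \<alpha> i (\<theta> hs a) (\<theta> hs' a) \<in> H)"
  unfolding theta_set_alpha_closed_def theta_set_def by blast

lemma theta_replicate_zero:
  assumes alg: "bit_speciale_algebra A z n \<alpha> \<theta>" and y: "y \<in> A"
  shows "\<theta> (replicate n z) y = y"
proof -
  have "map (\<lambda>i. \<alpha> i y y) [1..<n+1] = map (\<lambda>i. z) [1..<n+1]"
    using alg y unfolding bit_speciale_algebra_def by (intro map_cong) auto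
  then have "map (\<lambda>i. \<alpha> i y y) [1..<n+1] = replicate n z"
    by (simp add: map_replicate_const)
  then show ?thesis
    using alg y unfolding bit_speciale_algebra_def by metis
qed

lemma theta_set_subset:
  assumes alg: "bit_speciale_algebra A z n \<alpha> \<theta>" and "H \<subseteq> A" and "y \<in> A"
  shows "theta_set n \<theta> H y \<subseteq> A"
  using assms unfolding bit_speciale_algebra_def theta_set_def by blast

lemma mem_theta_set_if_alpha_mem:
  assumes alg: "bit_speciale_algebra A z n \<alpha> \<theta>" and x: "x \<in> A" and y: "y \<in> A"
    and alpha_mem: "\<forall>i\<in>{1..n}. \<alpha> i x y \<in> H"
  shows "x \<in> theta_set n \<theta> H y"
proof -
  have "x = \<theta> (map (\<lambda>i. \<alpha> i x y) [1..<n+1]) y"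
    using alg x y unfolding bit_speciale_algebra_def by metis
  moreover have "set (map (\<lambda>i. \<alpha> i x y) [1..<n+1]) \<subseteq> H"
    using alpha_mem by auto
  ultimately show ?thesis
    unfolding theta_set_def by force
qed

lemma mem_theta_set_self:
  assumes alg: "bit_speciale_algebra A z n \<alpha> \<theta>" and "z \<in> H" and "y \<in> A"
  shows "y \<in> theta_set n \<theta> H y"
  unfolding theta_set_def
proof (intro CollectI exI conjI)
  show "y = \<theta> (replicate n z) y"
    using theta_replicate_zero[OF alg \<open>y \<in> A\<close>] by simp
qed (use \<open>z \<in> H\<close> in auto)

lemma zero_mem_if_theta_set_alpha_closed:
  assumes alg: "bit_speciale_algebra A z n \<alpha> \<theta>" and HA: "H \<subseteq> A" and "H \<noteq> {}"
    and closed: "theta_set_alpha_closed A n \<alpha> \<theta> H"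
  shows "z \<in> H"
proof -
  obtain h where h: "h \<in> H" using \<open>H \<noteq> {}\<close> by blast
  have hA: "h \<in> A" using h HA by blast
  have n: "1 \<le> n" and alpha_diag: "\<And>x. x \<in> A \<Longrightarrow> \<alpha> 1 x x = z"
    using alg unfolding bit_speciale_algebra_def by auto
  let ?x = "\<theta> (replicate n h) h"
  have x: "?x \<in> theta_set n \<theta> H h"
    using h unfolding theta_set_def by force
  then have "\<alpha> 1 ?x ?x \<in> H"
    using closed hA n unfolding theta_set_alpha_closed_def by auto
  moreover have "?x \<in> A"
    using theta_set_subset[OF alg HA hA] x by blast
  ultimately show ?thesis
    using alpha_diag by simp
qed

lemma theta_set_subset_if_mem:
  assumes alg: "bit_speciale_algebra A z n \<alpha> \<theta>" and HA: "H \<subseteq> A" and a: "a \<in> A"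
    and closed: "theta_set_alpha_closed A n \<alpha> \<theta> H"
    and b: "b \<in> theta_set n \<theta> H a"
  shows "theta_set n \<theta> H a \<subseteq> theta_set n \<theta> H b"
proof
  fix c assume c: "c \<in> theta_set n \<theta> H a"
  have "\<forall>i\<in>{1..n}. \<alpha> i c b \<in> H"
    using closed a b c unfolding theta_set_alpha_closed_def by blast
  moreover have "b \<in> A" "c \<in> A"
    using theta_set_subset[OF alg HA a] b c by blast+
  ultimately show "c \<in> theta_set n \<theta> H b"
    using mem_theta_set_if_alpha_mem[OF alg] by blast
qed

lemma theta_set_eq_if_mem:
  assumes alg: "bit_speciale_algebra A z n \<alpha> \<theta>" and HA: "H \<subseteq> A" and a: "a \<in> A"
    and closed: "theta_set_alpha_closed A n \<alpha> \<theta> H" and "z \<in> H"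
    and b: "b \<in> theta_set n \<theta> H a"
  shows "theta_set n \<theta> H b = theta_set n \<theta> H a"
proof
  show ab: "theta_set n \<theta> H a \<subseteq> theta_set n \<theta> H b"
    using theta_set_subset_if_mem[OF alg HA a closed b] .
  have "b \<in> A"
    using theta_set_subset[OF alg HA a] b by blast
  moreover have "a \<in> theta_set n \<theta> H b"
    using ab mem_theta_set_self[OF alg \<open>z \<in> H\<close> a] by blast
  ultimately show "theta_set n \<theta> H b \<subseteq> theta_set n \<theta> H a"
    using theta_set_subset_if_mem[OF alg HA _ closed] by blast
qed

lemma sim_H_class_eq_theta_set:
  assumes alg: "bit_speciale_algebra A z n \<alpha> \<theta>" and HA: "H \<subseteq> A" and a: "a \<in> A"
    and closed: "theta_set_alpha_closed A n \<alpha> \<theta> H" and z: "z \<in> H"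
  shows "{b\<in>A. sim_H n \<theta> H a b} = theta_set n \<theta> H a"
proof (intro equalityI subsetI)
  fix b assume "b \<in> {b\<in>A. sim_H n \<theta> H a b}"
  then show "b \<in> theta_set n \<theta> H a"
    using mem_theta_set_self[OF alg z] unfolding sim_H_def by auto
next
  fix b assume "b \<in> theta_set n \<theta> H a"
  then show "b \<in> {b\<in>A. sim_H n \<theta> H a b}"
    using theta_set_eq_if_mem[OF alg HA a closed z] theta_set_subset[OF alg HA a]
    unfolding sim_H_def by auto
qed

lemma alpha_mem_if_sim_H:
  assumes alg: "bit_speciale_algebra A z n \<alpha> \<theta>"
    and closed: "theta_set_alpha_closed A n \<alpha> \<theta> H" and z: "z \<in> H"
    and "a \<in> A" "b \<in> A" and "sim_H n \<theta> H a b" and "i \<in> {1..n}"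
  shows "\<alpha> i a b \<in> H"
proof -
  have "a \<in> theta_set n \<theta> H b" "b \<in> theta_set n \<theta> H b"
    using assms mem_theta_set_self[OF alg z] unfolding sim_H_def by metis+
  then show ?thesis
    using closed assms unfolding theta_set_alpha_closed_def by blast
qed

lemma theta_set_alpha_closed_if_sim_H:
  assumes classes: "\<forall>a\<in>A. {b\<in>A. sim_H n \<theta> H a b} = theta_set n \<theta> H a"
    and alpha_mem: "\<forall>a\<in>A. \<forall>b\<in>A. sim_H n \<theta> H a b \<longrightarrow> (\<forall>i\<in>{1..n}. \<alpha> i a b \<in> H)"
  shows "theta_set_alpha_closed A n \<alpha> \<theta> H"
  unfolding theta_set_alpha_closed_def
proof (intro ballI)
  fix a i x y assume a: "a \<in> A" and i: "i \<in> {1..n}"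
    and "x \<in> theta_set n \<theta> H a" "y \<in> theta_set n \<theta> H a"
  then have "x \<in> A" "y \<in> A" "sim_H n \<theta> H a x" "sim_H n \<theta> H a y"
    using classes by blast+
  then show "\<alpha> i x y \<in> H"
    using alpha_mem i unfolding sim_H_def by simp
qed

theorem lemma2p4:
  fixes A H :: "'a set" and z :: 'a and n :: nat
    and \<alpha> :: "nat \<Rightarrow> 'a \<Rightarrow> 'a \<Rightarrow> 'a" and \<theta> :: "'a list \<Rightarrow> 'a \<Rightarrow> 'a"
  assumes alg: "bit_speciale_algebra A z n \<alpha> \<theta>"
    and HA: "H \<subseteq> A" and Hne: "H \<noteq> {}"
  shows "((\<forall>a\<in>A. \<forall>i\<in>{1..n}. \<forall>hs hs'. length hs = n \<longrightarrow> set hs \<subseteq> H \<longrightarrow>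
              length hs' = n \<longrightarrow> set hs' \<subseteq> H \<longrightarrow> \<alpha> i (\<theta> hs a) (\<theta> hs' a) \<in> H)
         \<longleftrightarrow>
         ((\<forall>a\<in>A. {b\<in>A. sim_H n \<theta> H a b} = theta_set n \<theta> H a) \<and>
          (\<forall>a\<in>A. \<forall>b\<in>A. sim_H n \<theta> H a b \<longrightarrow> (\<forall>i\<in>{1..n}. \<alpha> i a b \<in> H))))
       \<and>
       ((\<forall>a\<in>A. \<forall>i\<in>{1..n}. \<forall>hs hs'. length hs = n \<longrightarrow> set hs \<subseteq> H \<longrightarrow>
              length hs' = n \<longrightarrow> set hs' \<subseteq> H \<longrightarrow> \<alpha> i (\<theta> hs a) (\<theta> hs' a) \<in> H)
         \<longrightarrow> z \<in> H)"
  (is "(?I \<longleftrightarrow> ?classes \<and> ?alpha_mem) \<and> (?I \<longrightarrow> _)")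
proof -
  let ?closed = "theta_set_alpha_closed A n \<alpha> \<theta> H"
  have zero: "z \<in> H" if ?closed
    using zero_mem_if_theta_set_alpha_closed[OF alg HA Hne that] .
  have "?classes" if closed: ?closed
    using sim_H_class_eq_theta_set[OF alg HA _ closed zero[OF closed]] by blast
  moreover have "?alpha_mem" if closed: ?closed
    using alpha_mem_if_sim_H[OF alg closed zero[OF closed]] by blast
  moreover have "?closed" if ?classes ?alpha_mem
    using theta_set_alpha_closed_if_sim_H[OF that] .
  moreover have "?I \<longleftrightarrow> ?closed"
    using theta_set_alpha_closed_iff by metis
  ultimately show ?thesis
    using zero by blast
qed

end
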